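(* The relation $\{(\rho,\pi):\rho\text{ is total},\ \pi\text{ is trivial},\ |\rho|=|\pi|\}$ is $\Pi_3$-definable in $\mathbf Y^*=\langle\mathcal P,\le,[1]+[1]\rangle$.
   Context: $\mathcal P$ is the set of all integer partitions, including the empty partition $\emptyset$; a partition is a nonincreasing finite sequence of positive integers (its parts), and $|\pi|$ is the sum of its parts. A partition is total if it has exactly one part, and trivial if all its parts equal $1$; $\emptyset$ counts as both. Young's lattice $\mathbf Y=\langle\mathcal P,\le\rangle$ has $(s_1,\dots,s_r)\le(n_1,\dots,n_t)$ iff $r\le t$ and $s_i\le n_i$ for all $i\le r$; $\mathbf Y^*$ is $\mathbf Y$ with a constant symbol for the partition $(1,1)$. A relation is $\Pi_n$-definable if it is defined by a first-order formula in the language $\{\le,(1,1)\}$ in prenex form with $n$ alternating quantifier blocks, the outermost universal, and a quantifier-free matrix. *)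

theory Defs
  imports Main
begin

definition is_partition :: "nat list \<Rightarrow> bool" where
  "is_partition p \<longleftrightarrow> sorted_wrt (\<ge>) p \<and> (\<forall>x\<in>set p. 0 < x)"

definition psize :: "nat list \<Rightarrow> nat" where
  "psize p = sum_list p"

definition total :: "nat list \<Rightarrow> bool" where
  "total p \<longleftrightarrow> length p = 1 \<or> p = []"

definition trivial :: "nat list \<Rightarrow> bool" where
  "trivial p \<longleftrightarrow> (\<forall>x\<in>set p. x = 1)"

definition yle :: "nat list \<Rightarrow> nat list \<Rightarrow> bool" where
  "yle s n \<longleftrightarrow> length s \<le> length n \<and> (\<forall>i<length s. s ! i \<le> n ! i)"

datatype trm = V nat | C

datatype qf = Le trm trm | Eq trm trm | TT | Neg qf | Conj qf qf | Disj qf qf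

datatype form = QF qf | All nat form | Ex nat form

fun eval_trm :: "(nat \<Rightarrow> nat list) \<Rightarrow> trm \<Rightarrow> nat list" where
  "eval_trm e (V x) = e x"
| "eval_trm e C = [1, 1]"

fun sat_qf :: "(nat \<Rightarrow> nat list) \<Rightarrow> qf \<Rightarrow> bool" where
  "sat_qf e (Le s t) = yle (eval_trm e s) (eval_trm e t)"
| "sat_qf e (Eq s t) = (eval_trm e s = eval_trm e t)"
| "sat_qf e TT = True"
| "sat_qf e (Neg q) = (\<not> sat_qf e q)"
| "sat_qf e (Conj p q) = (sat_qf e p \<and> sat_qf e q)"
| "sat_qf e (Disj p q) = (sat_qf e p \<or> sat_qf e q)"

fun sat :: "(nat \<Rightarrow> nat list) \<Rightarrow> form \<Rightarrow> bool" where
  "sat e (QF q) = sat_qf e q"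
| "sat e (All x \<phi>) = (\<forall>p. is_partition p \<longrightarrow> sat (e(x := p)) \<phi>)"
| "sat e (Ex x \<phi>) = (\<exists>p. is_partition p \<and> sat (e(x := p)) \<phi>)"

text \<open>Prenex formulas with n alternating quantifier blocks (blocks may be empty),
  Pi: outermost block universal; Sigma: outermost block existential.\<close>
inductive is_Pi :: "nat \<Rightarrow> form \<Rightarrow> bool" and is_Sigma :: "nat \<Rightarrow> form \<Rightarrow> bool" where
  Pi0: "is_Pi 0 (QF q)"
| Sigma0: "is_Sigma 0 (QF q)"
| Pi_lift: "is_Sigma n \<phi> \<Longrightarrow> is_Pi (Suc n) \<phi>"
| Pi_All: "is_Pi (Suc n) \<phi> \<Longrightarrow> is_Pi (Suc n) (All x \<phi>)"
| Sigma_lift: "is_Pi n \<phi> \<Longrightarrow> is_Sigma (Suc n) \<phi>"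
| Sigma_Ex: "is_Sigma (Suc n) \<phi> \<Longrightarrow> is_Sigma (Suc n) (Ex x \<phi>)"

definition Pi_definable2 :: "nat \<Rightarrow> (nat list \<Rightarrow> nat list \<Rightarrow> bool) \<Rightarrow> bool" where
  "Pi_definable2 n R \<longleftrightarrow>
     (\<exists>\<phi>. is_Pi n \<phi> \<and>
        (\<forall>e. (\<forall>i. is_partition (e i)) \<longrightarrow> (sat e \<phi> \<longleftrightarrow> R (e 0) (e 1))))"

end

theory Submission
  imports Defs
begin

(*
  Write s_1 for the largest part and l(s) for the number of parts of s. The relation is defined
  by the Pi_3 condition: every x <= pi is comparable with (1,1); (1,1) <= rho fails; and every s
  either is the top of an interval [z, s] = {z < y < s} or satisfies rho <= s <-> pi <= s.
  The first two clauses say that pi is trivial and rho is total, and then rho <= s iff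
  |rho| <= s_1, and pi <= s iff |pi| <= l(s).

  Every s with s_1 ~= l(s) is the top of such an interval: remove one and then a second box from
  a row at least two longer than the next one (one exists if s_1 > l(s)), or from the last two
  rows of a block of equal rows (one exists if s_1 < l(s)). The staircase d = (N, N-1, ..., 1)
  is not: if z < d differs from d in two rows, removing the corner of either row gives two
  elements strictly between them, and if it differs in one row only, it is d minus a single
  corner. Hence the last clause says that rho and pi agree on all s with s_1 = l(s), which by
  the staircases is equivalent to |rho| = |pi|.
*)

section \<open>Partitions as row-length functions\<close>

definition part :: "nat list \<Rightarrow> nat \<Rightarrow> nat" where
  "part p i = (if i < length p then p ! i else 0)"

definition young :: "(nat \<Rightarrow> nat) \<Rightarrow> bool" where
  "young f \<longleftrightarrow> antimono f \<and> (\<exists>L. \<forall>i\<ge>L. f i = 0)"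

lemma part_pos_iff: "is_partition p \<Longrightarrow> 0 < part p i \<longleftrightarrow> i < length p"
  by (auto simp: part_def is_partition_def)

lemma antimono_part: "is_partition p \<Longrightarrow> antimono (part p)"
  by (auto simp: antimono_iff_le_Suc part_def is_partition_def sorted_wrt_iff_nth_less)

lemma young_part: "is_partition p \<Longrightarrow> young (part p)"
  unfolding young_def using antimono_part by (auto simp: part_def intro: exI[of _ "length p"])

lemma part_inject:
  assumes "is_partition p" "is_partition q" "part p = part q"
  shows "p = q"
proof -
  have "length p = length q"
    using part_pos_iff[OF assms(1)] part_pos_iff[OF assms(2)] assms(3) by (metis nat_neq_iff)
  then show ?thesis
  proof (rule nth_equalityI)
    show "p ! i = q ! i" if "i < length p" for i
      using that fun_cong[OF assms(3), of i] \<open>length p = length q\<close> by (simp add: part_def)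
  qed
qed

lemma ex_partition_part:
  assumes "young f"
  shows "\<exists>p. is_partition p \<and> part p = f"
proof -
  obtain L where "\<forall>i\<ge>L. f i = 0" and "antimono f"
    using assms by (auto simp: young_def)
  then show ?thesis
  proof (induction L)
    case 0
    then show ?case by (intro exI[of _ "[]"]) (auto simp: is_partition_def part_def)
  next
    case (Suc L)
    show ?case
    proof (cases "f L = 0")
      case True
      then show ?thesis using Suc by (metis le_antisym not_less_eq_eq)
    next
      case False
      then have "0 < f i" if "i \<le> L" for i
        using that \<open>antimono f\<close> by (metis antimonoD bot_nat_0.not_eq_extremum le_zero_eq)
      moreover have "is_partition (map f [0..<Suc L])"
        unfolding is_partition_def sorted_wrt_iff_nth_less
        using calculation Suc.prems(2) by (auto simp del: upt_Suc simp: antimonoD)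
      moreover have "part (map f [0..<Suc L]) = f"
        using Suc.prems(1) by (auto simp del: upt_Suc simp: part_def fun_eq_iff)
      ultimately show ?thesis by blast
    qed
  qed
qed

lemma yle_iff_part_le:
  assumes "is_partition s"
  shows "yle s n \<longleftrightarrow> part s \<le> part n"
proof
  show "part s \<le> part n" if "yle s n"
    using that by (auto simp: yle_def part_def le_fun_def)
next
  assume le: "part s \<le> part n"
  have "length s \<le> length n"
  proof (rule ccontr)
    assume "\<not> ?thesis"
    then have "0 < part s (length n)" using part_pos_iff[OF assms] by simp
    with le show False by (auto simp: le_fun_def part_def dest: spec[of _ "length n"])
  qed
  moreover have "s ! i \<le> n ! i" if "i < length s" for i
    using le_funD[OF le, of i] that calculation by (simp add: part_def)
  ultimately show "yle s n" by (simp add: yle_def)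
qed

section \<open>Tops of three-element chain intervals\<close>

definition chain_top :: "('a \<Rightarrow> bool) \<Rightarrow> ('a \<Rightarrow> 'a \<Rightarrow> bool) \<Rightarrow> 'a \<Rightarrow> bool" where
  "chain_top P R s \<longleftrightarrow> (\<exists>z y. P z \<and> P y \<and> R z y \<and> R y s \<and>
     (\<forall>w. P w \<longrightarrow> R z w \<longrightarrow> R w s \<longrightarrow> w = y))"

lemma chain_top_transfer:
  assumes into: "\<And>x. P x \<Longrightarrow> Q (f x)"
    and onto: "\<And>y. Q y \<Longrightarrow> \<exists>x. P x \<and> f x = y"
    and inj: "\<And>x y. P x \<Longrightarrow> P y \<Longrightarrow> f x = f y \<Longrightarrow> x = y"
    and rel: "\<And>x y. P x \<Longrightarrow> P y \<Longrightarrow> R x y \<longleftrightarrow> S (f x) (f y)"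
    and "P s"
  shows "chain_top P R s \<longleftrightarrow> chain_top Q S (f s)"
proof
  assume "chain_top P R s"
  then obtain z y where zy: "P z" "P y" "R z y" "R y s"
    and unique: "\<And>w. P w \<Longrightarrow> R z w \<Longrightarrow> R w s \<Longrightarrow> w = y"
    unfolding chain_top_def by blast
  have "w' = f y" if "Q w'" "S (f z) w'" "S w' (f s)" for w'
    using onto[OF \<open>Q w'\<close>] that unique rel zy(1) \<open>P s\<close> by blast
  then show "chain_top Q S (f s)"
    unfolding chain_top_def using zy into rel \<open>P s\<close> by blast
next
  assume "chain_top Q S (f s)"
  then obtain z' y' where "Q z'" "Q y'" "S z' y'" "S y' (f s)"
    and unique: "\<And>w'. Q w' \<Longrightarrow> S z' w' \<Longrightarrow> S w' (f s) \<Longrightarrow> w' = y'"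
    unfolding chain_top_def by blast
  moreover obtain z y where "P z" "f z = z'" "P y" "f y = y'"
    using onto \<open>Q z'\<close> \<open>Q y'\<close> by metis
  ultimately show "chain_top P R s"
    unfolding chain_top_def using into rel inj \<open>P s\<close> by metis
qed

lemma chain_top_young_intro:
  assumes "young g" "young h" "g < h" "h < f"
    and "\<And>w. young w \<Longrightarrow> g \<le> w \<Longrightarrow> w \<le> f \<Longrightarrow> w = g \<or> w = h \<or> w = f"
  shows "chain_top young (<) f"
  unfolding chain_top_def using assms by (metis less_le_not_le)

lemma young_if_le: "antimono g \<Longrightarrow> g \<le> f \<Longrightarrow> young f \<Longrightarrow> young g"
  unfolding young_def le_fun_def by (metis le_zero_eq)

lemma antimono_fun_upd:
  fixes f :: "nat \<Rightarrow> 'a::linorder"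
  assumes "antimono f" "f (Suc i) \<le> v" "v \<le> f i"
  shows "antimono (f(i := v))"
  using assms unfolding antimono_iff_le_Suc
  by (metis fun_upd_apply order.trans)

lemma fun_upd_minus_one_covered:
  fixes f y :: "'a \<Rightarrow> nat"
  assumes "f(i := f i - 1) \<le> y" "y \<le> f"
  shows "y = f(i := f i - 1) \<or> y = f"
proof -
  have "y j = f j" if "j \<noteq> i" for j
    using le_funD[OF assms(1), of j] le_funD[OF assms(2), of j] that by simp
  moreover have "y i = f i - 1 \<or> y i = f i"
    using le_funD[OF assms(1), of i] le_funD[OF assms(2), of i] by auto
  ultimately show ?thesis by (metis fun_upd_apply ext)
qed

lemma chain_top_young_long_row:
  assumes "young f" "f (Suc i) + 2 \<le> f i"
  shows "chain_top young (<) f"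
proof -
  define g where "g = f(i := f i - 2)"
  define h where "h = f(i := f i - 1)"
  have "antimono f" using assms(1) by (simp add: young_def)
  then have "antimono g" "antimono h"
    unfolding g_def h_def using assms(2) by (auto intro!: antimono_fun_upd)
  moreover have "g < h" "h < f"
    using assms(2) by (auto simp: g_def h_def le_fun_def less_fun_def dest: spec[of _ i])
  moreover have "w = g \<or> w = h \<or> w = f" if "g \<le> w" "w \<le> f" for w
  proof -
    have "w j = f j" if "j \<noteq> i" for j
      using le_funD[OF \<open>g \<le> w\<close>, of j] le_funD[OF \<open>w \<le> f\<close>, of j] that by (simp add: g_def)
    then have "w = f(i := w i)" by auto
    moreover have "f i - 2 \<le> w i" "w i \<le> f i"
      using le_funD[OF \<open>g \<le> w\<close>, of i] le_funD[OF \<open>w \<le> f\<close>, of i] by (auto simp: g_def)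
    then have "w i = f i - 2 \<or> w i = f i - 1 \<or> w i = f i" by linarith
    ultimately show ?thesis unfolding g_def h_def by (metis fun_upd_triv)
  qed
  ultimately show ?thesis
    using young_if_le[OF _ _ assms(1)]
    by (intro chain_top_young_intro) (auto dest: order.strict_trans intro: less_imp_le)
qed

lemma chain_top_young_equal_rows:
  assumes "young f" "0 < f i" "f (Suc i) = f i" "f (Suc (Suc i)) < f i"
  shows "chain_top young (<) f"
proof -
  define h where "h = f(Suc i := f i - 1)"
  define g where "g = h(i := f i - 1)"
  have "antimono f" using assms(1) by (simp add: young_def)
  then have "antimono h"
    unfolding h_def using assms by (intro antimono_fun_upd) auto
  then have "antimono g"
    unfolding g_def by (rule antimono_fun_upd) (auto simp: h_def)
  moreover have "g < h" "h < f"
    using assms(2,3) by (auto simp: g_def h_def le_fun_def less_fun_def dest: spec[of _ i] spec[of _ "Suc i"])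
  moreover have "w = g \<or> w = h \<or> w = f" if "antimono w" "g \<le> w" "w \<le> f" for w
  proof -
    have "w j = f j" if "j \<noteq> i" "j \<noteq> Suc i" for j
      using le_funD[OF \<open>g \<le> w\<close>, of j] le_funD[OF \<open>w \<le> f\<close>, of j] that by (simp add: g_def h_def)
    then have w: "w = f(i := w i, Suc i := w (Suc i))" by auto
    have "f i - 1 \<le> w (Suc i)" "w (Suc i) \<le> w i" "w i \<le> f i"
      using le_funD[OF \<open>g \<le> w\<close>, of "Suc i"] le_funD[OF \<open>w \<le> f\<close>, of i] \<open>antimono w\<close>
      by (auto simp: g_def h_def antimono_iff_le_Suc)
    then consider "w i = f i - 1" "w (Suc i) = f i - 1" | "w i = f i" "w (Suc i) = f i - 1"
      | "w i = f i" "w (Suc i) = f i"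
      by linarith
    then show ?thesis
      using w assms(3) unfolding g_def h_def by cases (auto simp: fun_upd_twist)
  qed
  ultimately show ?thesis
    using young_if_le[OF _ _ assms(1)] \<open>antimono h\<close>
    by (intro chain_top_young_intro) (auto dest: order.strict_trans intro: less_imp_le simp: young_def)
qed

lemma ex_long_step:
  fixes f :: "nat \<Rightarrow> nat"
  assumes "f L + L < f 0"
  shows "\<exists>i<L. f (Suc i) + 2 \<le> f i"
proof (rule ccontr)
  assume "\<not> ?thesis"
  then have "f 0 \<le> f k + k" if "k \<le> L" for k
    using that by (induction k) (auto simp: not_le Suc_le_eq)
  with assms show False by fastforce
qed

lemma ex_last_equal_rows:
  assumes "antimono f" "\<And>i. 0 < f i \<longleftrightarrow> i < L" "f 0 < L"
  shows "\<exists>i. 0 < f i \<and> f (Suc i) = f i \<and> f (Suc (Suc i)) < f i"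
proof -
  let ?eq = "\<lambda>i. Suc i < L \<and> f (Suc i) = f i"
  have step: "f (Suc i) \<le> f i" for i
    using \<open>antimono f\<close> by (simp add: antimono_iff_le_Suc)
  have "\<exists>i. ?eq i"
  proof (rule ccontr)
    assume "\<nexists>i. ?eq i"
    then have strict: "f (Suc i) < f i" if "Suc i < L" for i
      using that step[of i] by (auto simp: order.order_iff_strict)
    have "f k + k \<le> f 0" if "k < L" for k
      using that
    proof (induction k)
      case (Suc k)
      with strict[of k] show ?case by simp
    qed simp
    from this[of "L - 1"] assms(2)[of "L - 1"] assms(3) show False by simp
  qed
  then obtain i where "?eq i" and last: "\<And>j. ?eq j \<Longrightarrow> j \<le> i"
    using ex_has_greatest_nat[of ?eq _ id L] by auto
  have "f (Suc (Suc i)) < f (Suc i)"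
  proof (cases "Suc (Suc i) < L")
    case True
    then have "f (Suc (Suc i)) \<noteq> f (Suc i)" using last[of "Suc i"] by auto
    with step[of "Suc i"] show ?thesis by simp
  next
    case False
    then show ?thesis using assms(2)[of "Suc i"] assms(2)[of "Suc (Suc i)"] \<open>?eq i\<close> by simp
  qed
  with assms(2)[of i] \<open>?eq i\<close> show ?thesis by (intro exI[of _ i]) auto
qed

lemma chain_top_young:
  assumes "antimono f" "\<And>i. 0 < f i \<longleftrightarrow> i < L" "f 0 \<noteq> L"
  shows "chain_top young (<) f"
proof -
  have "young f" using assms(1,2) by (auto simp: young_def not_less[symmetric])
  show ?thesis
  proof (cases "L < f 0")
    case True
    with assms(2)[of L] obtain i where "f (Suc i) + 2 \<le> f i" using ex_long_step[of f L] by auto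
    with \<open>young f\<close> show ?thesis by (rule chain_top_young_long_row)
  next
    case False
    with assms obtain i where "0 < f i" "f (Suc i) = f i" "f (Suc (Suc i)) < f i"
      using ex_last_equal_rows[of f L] by auto
    with \<open>young f\<close> show ?thesis by (rule chain_top_young_equal_rows)
  qed
qed

lemma not_chain_top_staircase: "\<not> chain_top young (<) (\<lambda>i. N - i)"
proof
  define d where "d = (\<lambda>i::nat. N - i)"
  define corner where "corner k = d(k := d k - 1)" for k
  assume "chain_top young (<) (\<lambda>i. N - i)"
  then obtain z y where "young z" "z < y" "y < d"
    and unique: "\<And>w. young w \<Longrightarrow> z < w \<Longrightarrow> w < d \<Longrightarrow> w = y"
    unfolding chain_top_def d_def by blast
  have "young d" by (auto simp: young_def d_def antimono_iff_le_Suc)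
  have "z < d" using \<open>z < y\<close> \<open>y < d\<close> by simp
  then obtain i where "z i < d i"
    unfolding less_fun_def le_fun_def by (auto simp: not_le)
  have corner: "young (corner k) \<and> z \<le> corner k \<and> corner k < d" if "z k < d k" for k
  proof -
    have "antimono (corner k)"
      unfolding corner_def using that by (intro antimono_fun_upd) (auto simp: d_def antimono_iff_le_Suc)
    moreover have "corner k < d" "z \<le> corner k"
      using that \<open>z < d\<close> by (auto simp: corner_def le_fun_def less_fun_def dest: spec[of _ k])
    ultimately show ?thesis using young_if_le[OF _ _ \<open>young d\<close>] by auto
  qed
  have "\<exists>j. j \<noteq> i \<and> z j < d j"
  proof (rule ccontr)
    assume "\<nexists>j. j \<noteq> i \<and> z j < d j"
    then have "z j = d j" if "j \<noteq> i" for j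
      using that le_funD[of z d j] \<open>z < d\<close> le_neq_implies_less by fastforce
    moreover have "z (Suc i) \<le> z i"
      using \<open>young z\<close> by (simp add: young_def antimono_iff_le_Suc)
    ultimately have "z = corner i"
      using \<open>z i < d i\<close> by (fastforce simp: corner_def d_def)
    then have "y = z \<or> y = d"
      using fun_upd_minus_one_covered[of d i y] \<open>z < y\<close> \<open>y < d\<close> by (simp add: corner_def)
    with \<open>z < y\<close> \<open>y < d\<close> show False by auto
  qed
  then obtain j where "j \<noteq> i" "z j < d j" by blast
  then have "z < corner i" "z < corner j" "corner i \<noteq> corner j"
    using corner[of i] corner[of j] \<open>z i < d i\<close>
    by (auto simp: order.order_iff_strict corner_def fun_eq_iff dest: spec[of _ i] spec[of _ j])
  moreover have "corner i = y" "corner j = y"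
    using unique corner[OF \<open>z i < d i\<close>] corner[OF \<open>z j < d j\<close>] calculation by auto
  ultimately show False by simp
qed

definition yless :: "nat list \<Rightarrow> nat list \<Rightarrow> bool" where
  "yless a b \<longleftrightarrow> yle a b \<and> a \<noteq> b"

lemma yless_iff_part_less:
  assumes "is_partition a" "is_partition b"
  shows "yless a b \<longleftrightarrow> part a < part b"
  using part_inject[OF assms] yle_iff_part_le[OF assms(1)]
  by (auto simp: yless_def order.strict_iff_order)

lemma chain_top_partition_iff:
  "is_partition s \<Longrightarrow> chain_top is_partition yless s \<longleftrightarrow> chain_top young (<) (part s)"
  by (rule chain_top_transfer) (use young_part ex_partition_part part_inject yless_iff_part_less in auto)

lemma chain_top_partition:
  assumes "is_partition s" "part s 0 \<noteq> length s"
  shows "chain_top is_partition yless s"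
  using chain_top_young[OF antimono_part part_pos_iff] assms chain_top_partition_iff by blast

definition staircase :: "nat \<Rightarrow> nat list" where
  "staircase N = map (\<lambda>i. N - i) [0..<N]"

lemma part_staircase: "part (staircase N) = (\<lambda>i. N - i)"
  by (auto simp: part_def staircase_def fun_eq_iff)

lemma length_staircase: "length (staircase N) = N"
  by (simp add: staircase_def)

lemma is_partition_staircase: "is_partition (staircase N)"
  by (auto simp del: upt_Suc simp: is_partition_def staircase_def sorted_wrt_iff_nth_less)

lemma not_chain_top_partition_staircase: "\<not> chain_top is_partition yless (staircase N)"
  using chain_top_partition_iff[OF is_partition_staircase] not_chain_top_staircase
  by (simp add: part_staircase)

section \<open>Total and trivial partitions\<close>

lemma yle_total_iff:
  assumes "is_partition r" "total r"
  shows "yle r s \<longleftrightarrow> psize r \<le> part s 0"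
proof (cases r)
  case Nil
  then show ?thesis by (simp add: yle_def psize_def)
next
  case (Cons a r')
  with assms have "r = [a]" "0 < a"
    using part_pos_iff[OF assms(1), of 0] by (auto simp: total_def part_def)
  then show ?thesis by (cases s) (auto simp: yle_def psize_def part_def)
qed

lemma yle_trivial_iff:
  assumes "trivial p" "is_partition s"
  shows "yle p s \<longleftrightarrow> psize p \<le> length s"
proof -
  have "psize p = length p"
    using assms(1) by (induction p) (auto simp: trivial_def psize_def)
  moreover have "\<forall>i<length p. p ! i = 1"
    using assms(1) by (simp add: trivial_def)
  moreover have "0 < s ! i" if "i < length s" for i
    using part_pos_iff[OF assms(2), of i] that by (simp add: part_def)
  ultimately show ?thesis by (auto simp: yle_def Suc_le_eq)
qed

lemma yle_1_1_iff: "is_partition p \<Longrightarrow> yle [1, 1] p \<longleftrightarrow> 2 \<le> length p"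
  using part_pos_iff[of p 0] part_pos_iff[of p 1]
  by (auto simp: yle_def part_def less_Suc_eq)

lemma total_iff_not_yle:
  assumes "is_partition p"
  shows "total p \<longleftrightarrow> \<not> yle [1, 1] p"
  using yle_1_1_iff[OF assms] by (cases p) (auto simp: total_def Suc_le_eq)

lemma trivial_iff_part_0: "is_partition p \<Longrightarrow> trivial p \<longleftrightarrow> part p 0 \<le> 1"
proof
  show "part p 0 \<le> 1" if "trivial p"
    using that by (cases p) (auto simp: trivial_def part_def)
next
  assume "is_partition p" "part p 0 \<le> 1"
  have "p ! i = 1" if "i < length p" for i
    using antimonoD[OF antimono_part[OF \<open>is_partition p\<close>], of 0 i] part_pos_iff[OF \<open>is_partition p\<close>, of i]
      \<open>part p 0 \<le> 1\<close> that
    by (simp add: part_def split: if_splits)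
  then show "trivial p" by (auto simp: trivial_def in_set_conv_nth)
qed

lemma trivial_iff_below_comparable:
  assumes "is_partition p"
  shows "trivial p \<longleftrightarrow> (\<forall>x. is_partition x \<longrightarrow> yle x p \<longrightarrow> yle [1, 1] x \<or> yle x [1, 1])"
proof
  assume "trivial p"
  show "\<forall>x. is_partition x \<longrightarrow> yle x p \<longrightarrow> yle [1, 1] x \<or> yle x [1, 1]"
  proof (intro allI impI)
    fix x
    assume "is_partition x" "yle x p"
    show "yle [1, 1] x \<or> yle x [1, 1]"
    proof (cases "yle [1, 1] x")
      case False
      with \<open>is_partition x\<close> have "total x" using total_iff_not_yle by blast
      then have "psize x \<le> 1"
        using \<open>yle x p\<close> yle_total_iff[OF \<open>is_partition x\<close>] trivial_iff_part_0[OF assms] \<open>trivial p\<close>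
        by auto
      then show ?thesis
        using yle_total_iff[OF \<open>is_partition x\<close> \<open>total x\<close>, of "[1, 1]"] by (simp add: part_def)
    qed simp
  qed
next
  assume total_below: "\<forall>x. is_partition x \<longrightarrow> yle x p \<longrightarrow> yle [1, 1] x \<or> yle x [1, 1]"
  show "trivial p"
  proof (rule ccontr)
    assume "\<not> trivial p"
    then have "yle [2] p"
      using trivial_iff_part_0[OF assms] by (auto simp: yle_def part_def Suc_le_eq split: if_splits)
    moreover have "is_partition [2]" "\<not> yle [1, 1] [2]" "\<not> yle [2] [1, 1]"
      by (auto simp: is_partition_def yle_def)
    ultimately show False using total_below by blast
  qed
qed

lemma psize_eq_iff_agree:
  assumes r: "is_partition r" "total r" and p: "is_partition p" "trivial p"
  shows "psize r = psize p \<longleftrightarrow>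
    (\<forall>s. is_partition s \<longrightarrow> chain_top is_partition yless s \<or> (yle r s \<longleftrightarrow> yle p s))"
proof
  assume "psize r = psize p"
  have "yle r s \<longleftrightarrow> yle p s" if "is_partition s" "part s 0 = length s" for s
    using that \<open>psize r = psize p\<close> yle_total_iff[OF r] yle_trivial_iff[OF p(2)] by simp
  then show "\<forall>s. is_partition s \<longrightarrow> chain_top is_partition yless s \<or> (yle r s \<longleftrightarrow> yle p s)"
    using chain_top_partition by blast
next
  assume agree: "\<forall>s. is_partition s \<longrightarrow> chain_top is_partition yless s \<or> (yle r s \<longleftrightarrow> yle p s)"
  define N where "N = min (psize r) (psize p)"
  have "yle r (staircase N) \<longleftrightarrow> yle p (staircase N)"
    using agree is_partition_staircase not_chain_top_partition_staircase by blast
  then show "psize r = psize p"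
    using yle_total_iff[OF r] yle_trivial_iff[OF p(2) is_partition_staircase]
    by (auto simp: part_staircase length_staircase N_def)
qed

section \<open>The defining formula\<close>

definition lt_qf :: "trm \<Rightarrow> trm \<Rightarrow> qf" where
  "lt_qf a b = Conj (Le a b) (Neg (Eq a b))"

definition imp_qf :: "qf \<Rightarrow> qf \<Rightarrow> qf" where
  "imp_qf a b = Disj (Neg a) b"

definition iff_qf :: "qf \<Rightarrow> qf \<Rightarrow> qf" where
  "iff_qf a b = Disj (Conj a b) (Conj (Neg a) (Neg b))"

definition trivial_qf :: qf where
  "trivial_qf = imp_qf (Le (V 2) (V 1)) (Disj (Le C (V 2)) (Le (V 2) C))"

definition total_qf :: qf where
  "total_qf = Neg (Le C (V 0))"

definition chain_top_qf :: qf where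
  "chain_top_qf = Conj (lt_qf (V 4) (V 5)) (Conj (lt_qf (V 5) (V 3))
     (imp_qf (Conj (lt_qf (V 4) (V 6)) (lt_qf (V 6) (V 3))) (Eq (V 6) (V 5))))"

definition agree_qf :: qf where
  "agree_qf = iff_qf (Le (V 0) (V 3)) (Le (V 1) (V 3))"

(* Variables: 0 = rho, 1 = pi, 2 = x, 3 = s, 4 = z, 5 = y, 6 = w. *)

definition size_formula :: form where
  "size_formula = All 2 (All 3 (Ex 4 (Ex 5 (All 6
     (QF (Conj trivial_qf (Conj total_qf (Disj chain_top_qf agree_qf))))))))"

lemma sat_qf_lt_qf [simp]: "sat_qf e (lt_qf a b) \<longleftrightarrow> yless (eval_trm e a) (eval_trm e b)"
  by (simp add: lt_qf_def yless_def)

lemma sat_qf_imp_qf [simp]: "sat_qf e (imp_qf a b) \<longleftrightarrow> (sat_qf e a \<longrightarrow> sat_qf e b)"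
  by (simp add: imp_qf_def)

lemma sat_qf_iff_qf [simp]: "sat_qf e (iff_qf a b) \<longleftrightarrow> (sat_qf e a \<longleftrightarrow> sat_qf e b)"
  by (auto simp: iff_qf_def)

lemma is_Pi_size_formula: "is_Pi 3 size_formula"
  unfolding size_formula_def numeral_3_eq_3
  by (intro Pi_All Pi_lift Sigma_Ex Sigma_lift Sigma0)

lemma chain_top_prenex:
  assumes "P a"
  shows "chain_top P R s \<longleftrightarrow>
    (\<exists>z. P z \<and> (\<exists>y. P y \<and> (\<forall>w. P w \<longrightarrow> R z y \<and> R y s \<and> (R z w \<and> R w s \<longrightarrow> w = y))))"
  unfolding chain_top_def using assms by blast

lemma prenex_conj_disj:
  assumes "P a"
  shows "(\<forall>x. P x \<longrightarrow> (\<forall>s. P s \<longrightarrow> (\<exists>z. P z \<and> (\<exists>y. P y \<and>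
      (\<forall>w. P w \<longrightarrow> A x \<and> B \<and> (D z y w s \<or> E s))))))
    \<longleftrightarrow> (\<forall>x. P x \<longrightarrow> A x) \<and> B \<and>
      (\<forall>s. P s \<longrightarrow> (\<exists>z. P z \<and> (\<exists>y. P y \<and> (\<forall>w. P w \<longrightarrow> D z y w s))) \<or> E s)"
    (is "?prenex \<longleftrightarrow> ?split")
proof
  assume prenex: ?prenex
  have "A x \<and> B \<and> ((\<exists>z. P z \<and> (\<exists>y. P y \<and> (\<forall>w. P w \<longrightarrow> D z y w s))) \<or> E s)"
    if "P x" "P s" for x s
  proof -
    from prenex that obtain z y where "P z" "P y"
      and "\<forall>w. P w \<longrightarrow> A x \<and> B \<and> (D z y w s \<or> E s)" by blast
    with \<open>P a\<close> show ?thesis by blast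
  qed
  with \<open>P a\<close> show ?split by blast
next
  assume ?split
  show ?prenex
  proof (intro allI impI)
    fix x s
    assume "P x" "P s"
    show "\<exists>z. P z \<and> (\<exists>y. P y \<and> (\<forall>w. P w \<longrightarrow> A x \<and> B \<and> (D z y w s \<or> E s)))"
    proof (cases "E s")
      case True
      then show ?thesis using \<open>?split\<close> \<open>P x\<close> \<open>P a\<close> by blast
    next
      case False
      then obtain z y where "P z" "P y" "\<forall>w. P w \<longrightarrow> D z y w s"
        using \<open>?split\<close> \<open>P s\<close> by blast
      then show ?thesis using \<open>?split\<close> \<open>P x\<close> by blast
    qed
  qed
qed

lemma sat_size_formula:
  "sat e size_formula \<longleftrightarrow>
     (\<forall>x. is_partition x \<longrightarrow> yle x (e 1) \<longrightarrow> yle [1, 1] x \<or> yle x [1, 1]) \<and>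
     \<not> yle [1, 1] (e 0) \<and>
     (\<forall>s. is_partition s \<longrightarrow> chain_top is_partition yless s \<or> (yle (e 0) s \<longleftrightarrow> yle (e 1) s))"
proof -
  have "is_partition []" by (simp add: is_partition_def)
  have "sat e size_formula \<longleftrightarrow>
    (\<forall>x. is_partition x \<longrightarrow> (\<forall>s. is_partition s \<longrightarrow> (\<exists>z. is_partition z \<and> (\<exists>y. is_partition y \<and>
      (\<forall>w. is_partition w \<longrightarrow> (yle x (e 1) \<longrightarrow> yle [1, 1] x \<or> yle x [1, 1]) \<and> \<not> yle [1, 1] (e 0) \<and>
        ((yless z y \<and> yless y s \<and> (yless z w \<and> yless w s \<longrightarrow> w = y)) \<or>
         (yle (e 0) s \<longleftrightarrow> yle (e 1) s)))))))"
    by (simp add: size_formula_def trivial_qf_def total_qf_def chain_top_qf_def agree_qf_def)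
  then show ?thesis
    unfolding prenex_conj_disj[where P = is_partition, OF \<open>is_partition []\<close>]
      chain_top_prenex[where P = is_partition, OF \<open>is_partition []\<close>] .
qed

theorem lemma3p9:
  shows "Pi_definable2 3 (\<lambda>\<rho> \<pi>. total \<rho> \<and> trivial \<pi> \<and> psize \<rho> = psize \<pi>)"
  unfolding Pi_definable2_def
proof (intro exI[of _ size_formula] conjI is_Pi_size_formula allI impI)
  fix e :: "nat \<Rightarrow> nat list"
  assume "\<forall>i. is_partition (e i)"
  then have \<rho>: "is_partition (e 0)" and \<pi>: "is_partition (e 1)" by auto
  show "sat e size_formula \<longleftrightarrow> total (e 0) \<and> trivial (e 1) \<and> psize (e 0) = psize (e 1)"
    unfolding sat_size_formula total_iff_not_yle[OF \<rho>, symmetric]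
      trivial_iff_below_comparable[OF \<pi>, symmetric]
    using psize_eq_iff_agree[OF \<rho> _ \<pi>] by blast
qed

end
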